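(* Assume that every $3$-uniform hypergraph on $8$ vertices not containing a Fano plane has at most $48$ edges, and that the only such hypergraph with exactly $48$ edges (up to isomorphism) is $B_8$. Now let $n\ge 9$ be odd and let $H$ be a $3$-uniform hypergraph on $n$ vertices with $b(n)$ edges which does not contain a Fano plane. Suppose that whenever a four-element set $K\subseteq V(H)$ induces a tetrahedron in $H$ (i) we have $H\setminus K\cong B_{n-4}$, and (ii) every vertex $v\in V(H)\setminus K$ has degree exactly $5$ in $K$. Then $H$ is isomorphic to $B_n$.
   Context: "Containing" means having a (not necessarily induced) subhypergraph isomorphic to it. The Fano plane is the hypergraph on vertex set $\{1,\dots,7\}$ with edges $123,345,156,147,367,257,246$. For $m\ge1$, $B_m$ is the $3$-uniform hypergraph on $m$ vertices with a partition $V=X\cup Y$ into disjoint sets with $||X|-|Y||\le 1$ whose edges are exactly the triples meeting both $X$ and $Y$, and $b(m)=\frac{m-2}{2}\lfloor m^2/4\rfloor$ is its number of edges. A set $K$ of four vertices induces a tetrahedron if all four triples in $K$ are edges. $H\setminus K$ is the subhypergraph induced on $V(H)\setminus K$. The degree of $v$ in $K$ is the number of pairs $\{a,b\}\subseteq K$ with $\{v,a,b\}$ an edge of $H$. *)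

theory Defs
  imports Complex_Main
begin

definition hypergraph3 :: "'a set \<Rightarrow> 'a set set \<Rightarrow> bool" where
  "hypergraph3 V E \<longleftrightarrow> finite V \<and> (\<forall>e\<in>E. e \<subseteq> V \<and> card e = 3)"

definition fano_edges :: "nat set set" where
  "fano_edges = {{1,2,3},{3,4,5},{1,5,6},{1,4,7},{3,6,7},{2,5,7},{2,4,6}}"

definition contains_fano :: "'a set \<Rightarrow> 'a set set \<Rightarrow> bool" where
  "contains_fano V E \<longleftrightarrow>
     (\<exists>f :: nat \<Rightarrow> 'a. inj_on f {1..7} \<and> f ` {1..7} \<subseteq> V \<and> (\<forall>e\<in>fano_edges. f ` e \<in> E))"

definition hg_iso :: "'a set \<Rightarrow> 'a set set \<Rightarrow> 'b set \<Rightarrow> 'b set set \<Rightarrow> bool" where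
  "hg_iso V E W F \<longleftrightarrow>
     (\<exists>f. bij_betw f V W \<and> (\<forall>e. e \<subseteq> V \<longrightarrow> (f ` e \<in> F \<longleftrightarrow> e \<in> E)))"

definition B_V :: "nat \<Rightarrow> nat set" where
  "B_V m = {0..<m}"

definition B_E :: "nat \<Rightarrow> nat set set" where
  "B_E m = {e. e \<subseteq> {0..<m} \<and> card e = 3 \<and>
                e \<inter> {0..<m div 2} \<noteq> {} \<and> e \<inter> {m div 2..<m} \<noteq> {}}"

definition b :: "nat \<Rightarrow> real" where
  "b m = (real m - 2) / 2 * real (m^2 div 4)"

definition induces_tetrahedron :: "'a set \<Rightarrow> 'a set set \<Rightarrow> 'a set \<Rightarrow> bool" where
  "induces_tetrahedron V E K \<longleftrightarrow>
     K \<subseteq> V \<and> card K = 4 \<and> (\<forall>T. T \<subseteq> K \<and> card T = 3 \<longrightarrow> T \<in> E)"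

definition induced_edges :: "'a set set \<Rightarrow> 'a set \<Rightarrow> 'a set set" where
  "induced_edges E S = {e \<in> E. e \<subseteq> S}"

definition deg_in :: "'a set set \<Rightarrow> 'a \<Rightarrow> 'a set \<Rightarrow> nat" where
  "deg_in E v K = card {p. p \<subseteq> K \<and> card p = 2 \<and> insert v p \<in> E}"

end

theory Submission
  imports Defs
begin

(* A double count shows that b(n) edges force a tetrahedron K. On V - K we are given a copy of
   B(n-4) with parts X and Y. Applying the degree condition to tetrahedra spanned by two vertices
   of X and two of Y, and to tetrahedra through vertices of K, shows that each vertex of K is
   joined to V - K like a vertex of X or like a vertex of Y, that exactly two vertices of K go each
   way, and that this also fixes the triples meeting K in two vertices. Hence H is B(n) with parts
   X plus two vertices of K, and Y plus the other two. *)

lemma ex_other_if_card_ge_2: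
  assumes "card A \<ge> 2"
  obtains c where "c \<in> A" "c \<noteq> a"
proof -
  have "card (A - {a}) \<ge> 1" using assms by (cases "a \<in> A") (auto simp: card_Diff_singleton)
  then have "A - {a} \<noteq> {}" by (metis card.empty not_one_le_zero)
  then show ?thesis using that by blast
qed

lemma ex_two_if_card_ge_2:
  assumes "card A \<ge> 2"
  obtains x y where "x \<in> A" "y \<in> A" "x \<noteq> y"
proof -
  obtain B where "B \<subseteq> A" "card B = 2" using obtain_subset_with_card_n[OF assms] by metis
  then show ?thesis using that by (auto simp: card_2_iff)
qed

lemma ex_two_others_if_card_ge_3:
  assumes "card A \<ge> 3"
  obtains x y where "x \<in> A" "y \<in> A" "distinct [a, x, y]"
proof -
  have "card A \<ge> 2" using assms by simp
  then obtain x where x: "x \<in> A" "x \<noteq> a" by (rule ex_other_if_card_ge_2)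
  have "card (A - {a}) \<ge> 2" using assms by (cases "a \<in> A") (auto simp: card_Diff_singleton)
  then obtain y where "y \<in> A - {a}" "y \<noteq> x" by (rule ex_other_if_card_ge_2)
  then show ?thesis using that x by auto
qed

lemma ex1_mem_three_iff:
  assumes "distinct [u, v, w]"
  shows "(\<exists>!x. x \<in> {u, v, w} \<and> P x) \<longleftrightarrow>
    (P u \<and> \<not> P v \<and> \<not> P w) \<or> (\<not> P u \<and> P v \<and> \<not> P w) \<or> (\<not> P u \<and> \<not> P v \<and> P w)"
  using assms by auto

lemma card_3_cases_by_meet:
  assumes "card e = 3"
  obtains (none) "e \<inter> K = {}"
    | (one) a u w where "e = {a, u, w}" "a \<in> K" "u \<notin> K" "w \<notin> K" "u \<noteq> w"
    | (two) a a' w where "e = {a, a', w}" "a \<in> K" "a' \<in> K" "a \<noteq> a'" "w \<notin> K"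
    | (three) "e \<subseteq> K"
proof -
  have "finite e" using assms by (simp add: card_ge_0_finite)
  then have split: "card (e \<inter> K) + card (e - K) = 3" "e = (e \<inter> K) \<union> (e - K)"
    using assms card_Int_Diff[of e K] by auto
  consider "card (e \<inter> K) = 0" | "card (e \<inter> K) = 1" | "card (e \<inter> K) = 2" | "card (e - K) = 0"
    using split(1) by linarith
  then show ?thesis
  proof cases
    case 1
    then show ?thesis using none \<open>finite e\<close> by simp
  next
    case 2
    then obtain a where "e \<inter> K = {a}" by (auto simp: card_1_singleton_iff)
    moreover have "card (e - K) = 2" using 2 split(1) by simp
    then obtain u w where "e - K = {u, w}" "u \<noteq> w" unfolding card_2_iff by blast
    ultimately show ?thesis using one[of a u w] split(2) by auto
  next
    case 3
    then obtain a a' where "e \<inter> K = {a, a'}" "a \<noteq> a'" by (auto simp: card_2_iff)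
    moreover obtain w where "e - K = {w}" using 3 split(1) by (auto simp: card_1_singleton_iff)
    ultimately show ?thesis using two[of a a' w] split(2) by auto
  next
    case 4
    then show ?thesis using three \<open>finite e\<close> by simp
  qed
qed

lemma two_subset_of_four_cases:
  assumes "p \<subseteq> {t1, t2, t3, t4}" "card p = 2"
  shows "p \<in> {{t1, t2}, {t1, t3}, {t1, t4}, {t2, t3}, {t2, t4}, {t3, t4}}"
proof -
  obtain s t where p: "p = {s, t}" "s \<noteq> t" using assms(2) card_2_iff by metis
  then have "s \<in> {t1, t2, t3, t4}" "t \<in> {t1, t2, t3, t4}" using assms(1) by auto
  then show ?thesis using p by (auto simp: insert_commute)
qed

section \<open>Tetrahedra and link degrees\<close>

lemma induces_tetrahedronI:
  assumes "{t1, t2, t3, t4} \<subseteq> V" "distinct [t1, t2, t3, t4]"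
    and "{t1, t2, t3} \<in> E" "{t1, t2, t4} \<in> E" "{t1, t3, t4} \<in> E" "{t2, t3, t4} \<in> E"
  shows "induces_tetrahedron V E {t1, t2, t3, t4}"
proof -
  have "T \<in> E" if T: "T \<subseteq> {t1, t2, t3, t4}" "card T = 3" for T
  proof -
    have "card ({t1, t2, t3, t4} - T) = 1"
      using T assms(2) by (simp add: card_Diff_subset finite_subset)
    then obtain z where z: "{t1, t2, t3, t4} - T = {z}" by (meson card_1_singletonE)
    then have "T = {t1, t2, t3, t4} - {z}" "z \<in> {t1, t2, t3, t4}" using T(1) by auto
    then show ?thesis using assms(2-) by (auto simp: insert_Diff_if insert_commute)
  qed
  then show ?thesis using assms(1,2) unfolding induces_tetrahedron_def by auto
qed

lemma deg_in_add_card_nonedge_pairs: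
  assumes "card T = 4"
  shows "deg_in E v T + card {p. p \<subseteq> T \<and> card p = 2 \<and> insert v p \<notin> E} = 6"
proof -
  have "finite T" using assms by (simp add: card_ge_0_finite)
  then have "card {p. p \<subseteq> T \<and> card p = 2} = 6"
    using n_subsets[of T 2] assms by (simp add: numeral_eq_Suc)
  moreover have "{p. p \<subseteq> T \<and> card p = 2} =
      {p. p \<subseteq> T \<and> card p = 2 \<and> insert v p \<in> E} \<union> {p. p \<subseteq> T \<and> card p = 2 \<and> insert v p \<notin> E}"
    by auto
  moreover have "finite {p. p \<subseteq> T \<and> card p = 2}" using \<open>finite T\<close> by simp
  ultimately show ?thesis
    unfolding deg_in_def by (metis (no_types, lifting) card_Un_disjoint disjoint_iff finite_Un mem_Collect_eq)
qed

lemma unique_nonedge_pair_if_deg_in_5: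
  assumes "card T = 4" "deg_in E v T = 5"
  shows "\<exists>!p. p \<subseteq> T \<and> card p = 2 \<and> insert v p \<notin> E"
proof -
  have "card {p. p \<subseteq> T \<and> card p = 2 \<and> insert v p \<notin> E} = 1"
    using deg_in_add_card_nonedge_pairs[OF assms(1), where E = E and v = v] assms(2) by simp
  then obtain p where "{p. p \<subseteq> T \<and> card p = 2 \<and> insert v p \<notin> E} = {p}"
    by (meson card_1_singletonE)
  then have "\<forall>q. (q \<subseteq> T \<and> card q = 2 \<and> insert v q \<notin> E) \<longleftrightarrow> q = p"
    by (simp add: set_eq_iff)
  then show ?thesis by metis
qed

locale tetrahedron_degree_5 =
  fixes V :: "'a set" and E :: "'a set set"
  assumes deg_5: "\<And>T v. induces_tetrahedron V E T \<Longrightarrow> v \<in> V - T \<Longrightarrow> deg_in E v T = 5"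
begin

lemma nonedge_pairs_eq:
  assumes T: "induces_tetrahedron V E T" and v: "v \<in> V - T"
    and "u1 \<in> T" "u2 \<in> T" "u1 \<noteq> u2" "w1 \<in> T" "w2 \<in> T" "w1 \<noteq> w2"
    and "{u1, u2, v} \<notin> E" "{w1, w2, v} \<notin> E"
  shows "{u1, u2} = {w1, w2}"
proof -
  have "card T = 4" using T by (simp add: induces_tetrahedron_def)
  then have "\<And>p q. p \<subseteq> T \<Longrightarrow> card p = 2 \<Longrightarrow> insert v p \<notin> E \<Longrightarrow>
      q \<subseteq> T \<Longrightarrow> card q = 2 \<Longrightarrow> insert v q \<notin> E \<Longrightarrow> p = q"
    using unique_nonedge_pair_if_deg_in_5[OF _ deg_5[OF T v]] by blast
  from this[of "{u1, u2}" "{w1, w2}"] show ?thesis using assms(3-) by (simp add: insert_commute)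
qed

lemma edge_if_other_pair_nonedge:
  assumes T: "induces_tetrahedron V E T" and v: "v \<in> V - T"
    and "{u1, u2, w1, w2} \<subseteq> T" "u1 \<noteq> u2" "w1 \<noteq> w2" "{u1, u2} \<noteq> {w1, w2}"
    and "{v, u1, u2} \<notin> E"
  shows "{v, w1, w2} \<in> E"
proof (rule ccontr)
  assume "{v, w1, w2} \<notin> E"
  moreover have "{v, u1, u2} = {u1, u2, v}" "{v, w1, w2} = {w1, w2, v}" by auto
  ultimately show False using nonedge_pairs_eq[OF T v, of u1 u2 w1 w2] assms(3-) by auto
qed

lemma nonedge_pair_exists:
  assumes T: "induces_tetrahedron V E {t1, t2, t3, t4}" and v: "v \<in> V - {t1, t2, t3, t4}"
  shows "{v, t1, t2} \<notin> E \<or> {v, t1, t3} \<notin> E \<or> {v, t1, t4} \<notin> E \<or>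
         {v, t2, t3} \<notin> E \<or> {v, t2, t4} \<notin> E \<or> {v, t3, t4} \<notin> E"
proof -
  have "card {t1, t2, t3, t4} = 4" using T by (simp add: induces_tetrahedron_def)
  then obtain p where p: "p \<subseteq> {t1, t2, t3, t4}" "card p = 2" "insert v p \<notin> E"
    using unique_nonedge_pair_if_deg_in_5[OF _ deg_5[OF T v]] by blast
  then show ?thesis using two_subset_of_four_cases[OF p(1,2)] by auto
qed

text \<open>An apex of a triangle u w1 w2 is a vertex c such that {c, u, w1, w2} is a tetrahedron.\<close>

lemma apex_pair_unique_nonedge:
  assumes "{c, c', u, w1, w2} \<subseteq> V" "distinct [c, c', u, w1, w2]"
    and "{u, w1, w2} \<in> E"
    and "{c, u, w1} \<in> E" "{c, u, w2} \<in> E" "{c, w1, w2} \<in> E"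
    and "{c', u, w1} \<in> E" "{c', u, w2} \<in> E" "{c', w1, w2} \<in> E"
  shows "\<exists>!w. w \<in> {u, w1, w2} \<and> {c, c', w} \<notin> E"
proof -
  have T: "induces_tetrahedron V E {c, u, w1, w2}"
    using assms by (intro induces_tetrahedronI) auto
  have c': "c' \<in> V - {c, u, w1, w2}" using assms(1,2) by auto
  have "{c, w, c'} \<notin> E \<Longrightarrow> {c, w', c'} \<notin> E \<Longrightarrow> w \<in> {u, w1, w2} \<Longrightarrow> w' \<in> {u, w1, w2} \<Longrightarrow> w = w'"
    for w w'
    using nonedge_pairs_eq[OF T c', of c w c w'] assms(2) by (auto simp: doubleton_eq_iff)
  moreover have "{c', c, u} \<notin> E \<or> {c', c, w1} \<notin> E \<or> {c', c, w2} \<notin> E"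
    using nonedge_pair_exists[OF T c'] assms(7-9) by (auto simp: insert_commute)
  ultimately show ?thesis by (auto simp: insert_commute)
qed

lemma three_apexes_pair_edge:
  assumes K: "induces_tetrahedron V E K"
    and c: "c \<in> K" "c' \<in> K" "c'' \<in> K" "distinct [c, c', c'']"
    and w: "u \<in> V - K" "w1 \<in> V - K" "w2 \<in> V - K" "distinct [u, w1, w2]"
    and uw: "{u, w1, w2} \<in> E"
    and apex: "\<And>a. a \<in> {c, c', c''} \<Longrightarrow> {a, u, w1} \<in> E \<and> {a, u, w2} \<in> E \<and> {a, w1, w2} \<in> E"
  shows "{c, c', u} \<in> E"
proof (rule ccontr)
  assume cc'u: "{c, c', u} \<notin> E"
  have KV: "K \<subseteq> V" using K by (simp add: induces_tetrahedron_def)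
  have unique: "\<exists>!w. w \<in> {u, w1, w2} \<and> {a, a', w} \<notin> E"
    if "a \<in> {c, c', c''}" "a' \<in> {c, c', c''}" "a \<noteq> a'" for a a'
    using that c w KV apex[of a] apex[of a'] uw by (intro apex_pair_unique_nonedge) auto
  have "{c, c', w1} \<in> E" "{c, c', w2} \<in> E"
    using unique[of c c'] cc'u w(4) c(4) by auto
  then have T: "induces_tetrahedron V E {c, c', w1, w2}"
    using c w KV apex by (intro induces_tetrahedronI) auto
  have c'': "c'' \<in> V - {c, c', w1, w2}" using c w KV by auto
  have "{c, c'', u} \<in> E" "{c', c'', u} \<in> E"
    using nonedge_pairs_eq[OF K w(1), of c c' c c''] nonedge_pairs_eq[OF K w(1), of c c' c' c'']
      cc'u c by (auto simp: doubleton_eq_iff)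
  then have "({c, c'', w1} \<notin> E \<or> {c, c'', w2} \<notin> E) \<and> ({c', c'', w1} \<notin> E \<or> {c', c'', w2} \<notin> E)"
    using unique[of c c''] unique[of c' c''] c(4) by auto
  moreover have mixed: "{c, c'', w} \<in> E \<or> {c', c'', w'} \<in> E" if "w \<in> {w1, w2}" "w' \<in> {w1, w2}" for w w'
  proof (rule ccontr)
    assume "\<not> ?thesis"
    then have "{c, w, c''} \<notin> E" "{c', w', c''} \<notin> E" by (simp_all add: insert_commute)
    then have "{c, w} = {c', w'}"
      using nonedge_pairs_eq[OF T c'', of c w c' w'] that c w by auto
    then show False using that c w by (auto simp: doubleton_eq_iff)
  qed
  ultimately show False using mixed[of w1 w1] mixed[of w1 w2] mixed[of w2 w1] mixed[of w2 w2] by auto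
qed

text \<open>Each pair of apexes in K misses exactly one vertex of the triangle, never u, and two
  pairs never miss the same vertex because K is a tetrahedron; three pairs do not fit into w1, w2.\<close>

lemma card_apexes_le_2:
  assumes K: "induces_tetrahedron V E K"
    and w: "u \<in> V - K" "w1 \<in> V - K" "w2 \<in> V - K" "distinct [u, w1, w2]"
    and uw: "{u, w1, w2} \<in> E"
    and C: "C \<subseteq> K" "\<And>a. a \<in> C \<Longrightarrow> {a, u, w1} \<in> E \<and> {a, u, w2} \<in> E \<and> {a, w1, w2} \<in> E"
  shows "card C \<le> 2"
proof (rule ccontr)
  assume "\<not> card C \<le> 2"
  then obtain B where "B \<subseteq> C" "card B = 3"
    using obtain_subset_with_card_n[of 3 C] by force
  then obtain c1 c2 c3 where c: "{c1, c2, c3} \<subseteq> C" "distinct [c1, c2, c3]"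
    by (auto simp: card_3_iff)
  have KV: "K \<subseteq> V" using K by (simp add: induces_tetrahedron_def)
  have nonedge: "\<exists>w\<in>{w1, w2}. {a, a', w} \<notin> E"
    if "a \<in> C" "a' \<in> C" "a'' \<in> C" "distinct [a, a', a'']" for a a' a''
  proof -
    have "{a, a', u} \<in> E"
      using that C by (intro three_apexes_pair_edge[OF K _ _ _ _ w uw, where c'' = a'']) auto
    moreover have "\<exists>!w. w \<in> {u, w1, w2} \<and> {a, a', w} \<notin> E"
      using that C w uw KV by (intro apex_pair_unique_nonedge) auto
    ultimately show ?thesis by (auto simp: insert_commute)
  qed
  obtain w12 w13 w23 where "w12 \<in> {w1, w2}" "w13 \<in> {w1, w2}" "w23 \<in> {w1, w2}"
    and "{c1, c2, w12} \<notin> E" "{c1, c3, w13} \<notin> E" "{c2, c3, w23} \<notin> E"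
    using nonedge[of c1 c2 c3] nonedge[of c1 c3 c2] nonedge[of c2 c3 c1] c by auto
  moreover have "w12 = w13 \<or> w12 = w23 \<or> w13 = w23" using calculation(1-3) by auto
  moreover have "{c1, c2, c3} \<subseteq> K" "w12 \<in> V - K" "w13 \<in> V - K"
    using c C(1) calculation(1-3) w by auto
  ultimately show False
    using nonedge_pairs_eq[OF K, of w12 c1 c2 c1 c3] nonedge_pairs_eq[OF K, of w12 c1 c2 c2 c3]
      nonedge_pairs_eq[OF K, of w13 c1 c3 c2 c3] c
    by (auto simp: doubleton_eq_iff)
qed

end

section \<open>Many edges force a tetrahedron\<close>

lemma card_supersets_insert:
  assumes "finite V" "T \<subseteq> V"
  shows "card {Q. Q \<subseteq> V \<and> card Q = Suc (card T) \<and> T \<subseteq> Q} = card V - card T"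
proof -
  have finT: "finite T" using assms finite_subset by blast
  have "bij_betw (\<lambda>v. insert v T) (V - T) {Q. Q \<subseteq> V \<and> card Q = Suc (card T) \<and> T \<subseteq> Q}"
  proof (rule bij_betwI')
    fix Q assume Q: "Q \<in> {Q. Q \<subseteq> V \<and> card Q = Suc (card T) \<and> T \<subseteq> Q}"
    then have "card (Q - T) = 1" using finT by (simp add: card_Diff_subset)
    then obtain v where "Q - T = {v}" by (meson card_1_singletonE)
    then show "\<exists>v\<in>V - T. Q = insert v T" using Q by blast
  qed (use assms finT in \<open>auto simp: insert_ident\<close>)
  then have "card {Q. Q \<subseteq> V \<and> card Q = Suc (card T) \<and> T \<subseteq> Q} = card (V - T)"
    by (simp add: bij_betw_same_card)
  then show ?thesis using finT assms by (simp add: card_Diff_subset)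
qed

text \<open>Every 4-set misses a triple of E, and each missed triple lies in only n - 3 of the 4-sets.\<close>
lemma card_edges_le_if_no_tetrahedron:
  assumes H: "hypergraph3 V E" and "card V \<ge> 4"
    and no_tet: "\<And>K. \<not> induces_tetrahedron V E K"
  shows "4 * card E \<le> 3 * (card V choose 3)"
proof -
  define n where "n = card V"
  have fin: "finite V" using H unfolding hypergraph3_def by auto
  define N where "N = {T. T \<subseteq> V \<and> card T = 3} - E"
  have E_sub: "E \<subseteq> {T. T \<subseteq> V \<and> card T = 3}" using H unfolding hypergraph3_def by auto
  have fin3: "finite {T. T \<subseteq> V \<and> card T = 3}" using fin by simp
  have card_E: "card E \<le> n choose 3"
    using card_mono[OF fin3 E_sub] n_subsets[OF fin, of 3] unfolding n_def by simp
  have card_N: "card N = (n choose 3) - card E"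
    using card_Diff_subset[OF finite_subset[OF E_sub fin3] E_sub] n_subsets[OF fin, of 3]
    unfolding N_def n_def by simp
  have finN: "finite N" unfolding N_def using fin by simp
  have "{Q. Q \<subseteq> V \<and> card Q = 4} \<subseteq> (\<Union>T\<in>N. {Q. Q \<subseteq> V \<and> card Q = 4 \<and> T \<subseteq> Q})"
  proof
    fix Q assume Q: "Q \<in> {Q. Q \<subseteq> V \<and> card Q = 4}"
    then obtain T where "T \<subseteq> Q" "card T = 3" "T \<notin> E"
      using no_tet[of Q] unfolding induces_tetrahedron_def by blast
    then show "Q \<in> (\<Union>T\<in>N. {Q. Q \<subseteq> V \<and> card Q = 4 \<and> T \<subseteq> Q})"
      using Q unfolding N_def by auto
  qed
  moreover have "finite (\<Union>T\<in>N. {Q. Q \<subseteq> V \<and> card Q = 4 \<and> T \<subseteq> Q})"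
    using finN fin by auto
  ultimately have "card {Q. Q \<subseteq> V \<and> card Q = 4} \<le>
      card (\<Union>T\<in>N. {Q. Q \<subseteq> V \<and> card Q = 4 \<and> T \<subseteq> Q})"
    by (rule card_mono[rotated])
  then have "n choose 4 \<le> card (\<Union>T\<in>N. {Q. Q \<subseteq> V \<and> card Q = 4 \<and> T \<subseteq> Q})"
    using n_subsets[OF fin, of 4] unfolding n_def by simp
  also have "\<dots> \<le> (\<Sum>T\<in>N. card {Q. Q \<subseteq> V \<and> card Q = 4 \<and> T \<subseteq> Q})"
    using finN by (rule card_UN_le)
  also have "\<dots> = (\<Sum>T\<in>N. n - 3)"
  proof (rule sum.cong)
    fix T assume "T \<in> N"
    then show "card {Q. Q \<subseteq> V \<and> card Q = 4 \<and> T \<subseteq> Q} = n - 3"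
      using card_supersets_insert[OF fin, of T] unfolding N_def n_def by simp
  qed simp
  also have "\<dots> = card N * (n - 3)" by simp
  finally have "4 * (n choose 4) \<le> 4 * ((n choose 3) - card E) * (n - 3)"
    using card_N by simp
  moreover have "4 * (n choose 4) = (n - 3) * (n choose 3)"
    using times_binomial_minus1_eq[of 4 n] binomial_absorb_comp[of n 3] by simp
  ultimately have "(n - 3) * (n choose 3) \<le> (n - 3) * (4 * ((n choose 3) - card E))"
    by (simp add: algebra_simps)
  then have "n choose 3 \<le> 4 * ((n choose 3) - card E)"
    using assms(2) unfolding n_def by simp
  then show ?thesis using card_E unfolding n_def by linarith
qed

lemma b_gt_three_quarters_choose_3:
  assumes "odd n" "n \<ge> 3"
  shows "3 * real (n choose 3) < 4 * b n"
proof -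
  obtain k where n: "n = 2 * k + 1" using assms(1) oddE by blast
  have k: "k \<ge> 1" using n assms(2) by simp
  define P where "P = real k * (2 * real k - 1)"
  have P_pos: "P > 0" unfolding P_def using k by simp
  have "2 * k choose 2 = k * (2 * k - 1)"
    using choose_two[of "2 * k"] by simp
  then have "3 * (n choose 3) = (2 * k + 1) * (k * (2 * k - 1))"
    using times_binomial_minus1_eq[of 3 n] n by simp
  then have "3 * real (n choose 3) = real ((2 * k + 1) * (k * (2 * k - 1)))"
    by (metis of_nat_mult of_nat_numeral)
  also have "\<dots> = (2 * real k + 1) * P"
    unfolding P_def using k by (simp add: of_nat_diff algebra_simps)
  also have "\<dots> < (2 * real k + 2) * P"
    using P_pos by simp
  also have "\<dots> = 4 * b n"
  proof -
    have "n\<^sup>2 = 4 * (k * (k + 1)) + 1" using n by (simp add: power2_eq_square algebra_simps)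
    then have "n\<^sup>2 div 4 = k * (k + 1)" by simp
    then show ?thesis unfolding b_def P_def using n by (simp add: algebra_simps)
  qed
  finally show ?thesis .
qed

lemma ex_tetrahedron_if_card_eq_b:
  assumes H: "hypergraph3 V E" and "odd (card V)" "card V \<ge> 4"
    and card_E: "real (card E) = b (card V)"
  obtains K where "induces_tetrahedron V E K"
proof (rule ccontr)
  assume "\<not> thesis"
  then have "4 * card E \<le> 3 * (card V choose 3)"
    using that card_edges_le_if_no_tetrahedron[OF H assms(3)] by blast
  then have "4 * b (card V) \<le> 3 * real (card V choose 3)"
    using card_E by (metis of_nat_le_iff of_nat_mult of_nat_numeral)
  then show False using b_gt_three_quarters_choose_3[OF assms(2)] assms(3) by simp
qed

section \<open>Cut hypergraphs\<close>

definition cut_triples :: "'a set \<Rightarrow> 'a set \<Rightarrow> 'a set set" where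
  "cut_triples V S = {e. e \<subseteq> V \<and> card e = 3 \<and> e \<inter> S \<noteq> {} \<and> e - S \<noteq> {}}"

lemma B_E_eq_cut_triples: "B_E m = cut_triples {0..<m} {0..<m div 2}"
  unfolding B_E_def cut_triples_def by fastforce

lemma image_mem_cut_triples_iff:
  assumes f: "bij_betw f V W" and "S \<subseteq> V" "e \<subseteq> V"
  shows "f ` e \<in> cut_triples W (f ` S) \<longleftrightarrow> e \<in> cut_triples V S"
proof -
  have inj: "inj_on f V" using f by (rule bij_betw_imp_inj_on)
  have "card (f ` e) = card e" using inj assms(3) by (simp add: card_image inj_on_subset)
  moreover have "f ` e \<subseteq> W" using f assms(3) by (auto simp: bij_betw_def)
  moreover have "f ` e \<inter> f ` S = f ` (e \<inter> S)" "f ` e - f ` S = f ` (e - S)"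
    using inj_on_image_Int[OF inj assms(3,2)] inj_on_image_set_diff[OF inj _ assms(2)] assms(3)
    by auto
  ultimately show ?thesis
    using assms(3) unfolding cut_triples_def by (simp only: mem_Collect_eq image_is_empty)
qed

lemma ex_bij_betw_prefix:
  assumes "finite V" "S \<subseteq> V"
  obtains f where "bij_betw f V {0..<card V}" "f ` S = {0..<card S}"
proof -
  have "finite S" using assms finite_subset by blast
  then obtain g1 where g1: "bij_betw g1 S {0..<card S}"
    using ex_bij_betw_finite_nat by blast
  obtain g2 where g2: "bij_betw g2 (V - S) {card S..<card V}"
    using finite_same_card_bij[of "V - S" "{card S..<card V}"] assms \<open>finite S\<close>
    by (auto simp: card_Diff_subset)
  define f where "f v = (if v \<in> S then g1 v else g2 v)" for v
  have "bij_betw f S {0..<card S}"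
    using g1 by (rule bij_betw_cong[THEN iffD2, rotated]) (simp add: f_def)
  moreover have "bij_betw f (V - S) {card S..<card V}"
    using g2 by (rule bij_betw_cong[THEN iffD2, rotated]) (simp add: f_def)
  ultimately have "bij_betw f (S \<union> (V - S)) ({0..<card S} \<union> {card S..<card V})"
    by (rule bij_betw_combine) auto
  moreover have "S \<union> (V - S) = V" "{0..<card S} \<union> {card S..<card V} = {0..<card V}"
    using assms card_mono[OF assms] by auto
  ultimately show ?thesis using that \<open>bij_betw f S {0..<card S}\<close> by (simp add: bij_betw_def)
qed

lemma hg_iso_B_if_eq_cut_triples:
  assumes "finite V" "S \<subseteq> V" "card S = card V div 2"
  shows "hg_iso V (cut_triples V S) (B_V (card V)) (B_E (card V))"
proof -
  obtain f where f: "bij_betw f V {0..<card V}" "f ` S = {0..<card V div 2}"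
    using ex_bij_betw_prefix[OF assms(1,2)] assms(3) by metis
  then show ?thesis
    unfolding hg_iso_def B_V_def B_E_eq_cut_triples
    using image_mem_cut_triples_iff[OF f(1) assms(2)] by auto
qed

lemma eq_cut_triples_if_hg_iso_B:
  assumes iso: "hg_iso W F (B_V m) (B_E m)" and F: "\<forall>e\<in>F. e \<subseteq> W"
  obtains S where "S \<subseteq> W" "card S = m div 2" "F = cut_triples W S"
proof -
  obtain f where f: "bij_betw f W {0..<m}"
    and edges: "\<And>e. e \<subseteq> W \<Longrightarrow> f ` e \<in> B_E m \<longleftrightarrow> e \<in> F"
    using iso unfolding hg_iso_def B_V_def by blast
  define S where "S = {w \<in> W. f w < m div 2}"
  have image_S: "f ` S = {0..<m div 2}"
    using f unfolding S_def bij_betw_def by force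
  have "e \<in> F \<longleftrightarrow> e \<in> cut_triples W S" for e
  proof (cases "e \<subseteq> W")
    case True
    have "e \<in> F \<longleftrightarrow> f ` e \<in> cut_triples {0..<m} (f ` S)"
      using edges[OF True] unfolding B_E_eq_cut_triples image_S ..
    also have "\<dots> \<longleftrightarrow> e \<in> cut_triples W S"
      using image_mem_cut_triples_iff[OF f _ True, of S] unfolding S_def by blast
    finally show ?thesis .
  qed (use F in \<open>auto simp: cut_triples_def\<close>)
  moreover have "S \<subseteq> W" unfolding S_def by blast
  moreover have "card S = m div 2"
    using card_image[OF inj_on_subset[OF bij_betw_imp_inj_on[OF f] \<open>S \<subseteq> W\<close>]] image_S by simp
  ultimately show ?thesis using that by blast
qed

section \<open>Extending B(n-4) across a tetrahedron\<close>

text \<open>X and Y are the parts of the given copy of B(n-4) on V - K.  The parts of the resulting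
  copy of B(n) are X plus KX and Y plus K - KX.\<close>

locale tetrahedron_split = tetrahedron_degree_5 +
  fixes K X :: "'a set"
  assumes hypergraph: "hypergraph3 V E"
    and K: "induces_tetrahedron V E K"
    and X_sub: "X \<subseteq> V - K"
    and outside_K: "induced_edges E (V - K) = cut_triples (V - K) X"
    and card_X: "card X \<ge> 2" and card_Y: "card (V - K - X) \<ge> 3"
begin

definition Y :: "'a set" where "Y = V - K - X"

lemma card_Y_ge_3: "card Y \<ge> 3"
  using card_Y unfolding Y_def .

lemma ex_two_in_X: obtains x x' where "x \<in> X" "x' \<in> X" "x \<noteq> x'"
  using card_X by (rule ex_two_if_card_ge_2)

lemma ex_other_in_Y: obtains y' where "y' \<in> Y" "y' \<noteq> y"
proof -
  have "card Y \<ge> 2" using card_Y_ge_3 by simp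
  then show ?thesis using that by (rule ex_other_if_card_ge_2)
qed

lemma ex_two_in_Y: obtains y y' where "y \<in> Y" "y' \<in> Y" "y \<noteq> y'"
proof -
  obtain y where "y \<in> Y" by (rule ex_other_in_Y)
  moreover obtain y' where "y' \<in> Y" "y' \<noteq> y" by (rule ex_other_in_Y)
  ultimately show ?thesis using that by blast
qed

lemma K_sub: "K \<subseteq> V" and card_K: "card K = 4"
  using K by (auto simp: induces_tetrahedron_def)

lemma finite_K: "finite K"
  using card_K by (simp add: card_ge_0_finite)

lemma in_X_imp [simp]: "x \<in> X \<Longrightarrow> x \<in> V" "x \<in> X \<Longrightarrow> x \<notin> K"
  and in_Y_imp [simp]: "y \<in> Y \<Longrightarrow> y \<in> V" "y \<in> Y \<Longrightarrow> y \<notin> K" "y \<in> Y \<Longrightarrow> y \<notin> X"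
  and in_K_imp [simp]: "a \<in> K \<Longrightarrow> a \<in> V"
  using X_sub K_sub unfolding Y_def by auto

lemma parts_distinct [simp]:
  "a \<in> K \<Longrightarrow> x \<in> X \<Longrightarrow> a \<noteq> x" "a \<in> K \<Longrightarrow> x \<in> X \<Longrightarrow> x \<noteq> a"
  "a \<in> K \<Longrightarrow> y \<in> Y \<Longrightarrow> a \<noteq> y" "a \<in> K \<Longrightarrow> y \<in> Y \<Longrightarrow> y \<noteq> a"
  "x \<in> X \<Longrightarrow> y \<in> Y \<Longrightarrow> x \<noteq> y" "x \<in> X \<Longrightarrow> y \<in> Y \<Longrightarrow> y \<noteq> x"
  by auto

lemma outside_K_cases: "v \<in> V - K \<Longrightarrow> v \<in> X \<or> v \<in> Y"
  unfolding Y_def by blast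

lemma outside_edge_iff:
  assumes "{u, v, w} \<subseteq> V - K" "distinct [u, v, w]"
  shows "{u, v, w} \<in> E \<longleftrightarrow> \<not> {u, v, w} \<subseteq> X \<and> \<not> {u, v, w} \<subseteq> Y"
proof -
  have "{u, v, w} \<in> E \<longleftrightarrow> {u, v, w} \<in> cut_triples (V - K) X"
    using outside_K assms(1) unfolding induced_edges_def set_eq_iff by blast
  then show ?thesis using assms unfolding cut_triples_def Y_def by auto
qed

lemma edge_XXY: "x \<in> X \<Longrightarrow> x' \<in> X \<Longrightarrow> x \<noteq> x' \<Longrightarrow> y \<in> Y \<Longrightarrow> {x, x', y} \<in> E"
  and edge_XYY: "x \<in> X \<Longrightarrow> y \<in> Y \<Longrightarrow> y' \<in> Y \<Longrightarrow> y \<noteq> y' \<Longrightarrow> {x, y, y'} \<in> E"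
  and nonedge_YYY: "{y, y', y''} \<subseteq> Y \<Longrightarrow> distinct [y, y', y''] \<Longrightarrow> {y, y', y''} \<notin> E"
  by (subst outside_edge_iff; auto)+

lemma tetrahedron_XXYY:
  assumes "x \<in> X" "x' \<in> X" "x \<noteq> x'" "y \<in> Y" "y' \<in> Y" "y \<noteq> y'"
  shows "induces_tetrahedron V E {x, x', y, y'}"
  using assms edge_XXY edge_XYY by (intro induces_tetrahedronI) auto

lemma cross_edge:
  assumes a: "a \<in> K" and x: "x \<in> X" and y: "y \<in> Y"
  shows "{a, x, y} \<in> E"
proof (rule ccontr)
  assume axy: "{a, x, y} \<notin> E"
  \<comment> \<open>Then a sees all other pairs of {x, x', y, y'} and {x, x', y, y''}, so {a, x', y, y'} is a
    tetrahedron, and y'' misses both of its pairs {y, y'} and {a, y'}.\<close>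
  obtain x' where x': "x' \<in> X" "x' \<noteq> x" using card_X ex_other_if_card_ge_2 by metis
  obtain y' y'' where y': "y' \<in> Y" "y'' \<in> Y" "distinct [y, y', y'']"
    using card_Y_ge_3 ex_two_others_if_card_ge_3 by metis
  note facts = a x y x' y'
  have other_pairs: "{a, w, w'} \<in> E"
    if "y0 \<in> Y" "y0 \<noteq> y" "{w, w'} \<subseteq> {x, x', y, y0}" "w \<noteq> w'" "{w, w'} \<noteq> {x, y}" for y0 w w'
    using edge_if_other_pair_nonedge[OF tetrahedron_XXYY[of x x' y y0], of a x y w w'] that axy facts
    by auto
  have "{a, x', y} \<in> E" "{a, x', y'} \<in> E" "{a, y, y'} \<in> E" "{a, x, x'} \<in> E" "{a, x, y'} \<in> E"
    using other_pairs[of y'] facts by (auto simp: doubleton_eq_iff)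
  moreover have "{a, x', y''} \<in> E" "{a, x, y''} \<in> E"
    using other_pairs[of y''] facts by (auto simp: doubleton_eq_iff)
  ultimately have "{a, y', y''} \<notin> E"
    using nonedge_pair_exists[OF tetrahedron_XXYY[of x x' y' y''], of a] facts by auto
  moreover have "induces_tetrahedron V E {a, x', y, y'}"
    using \<open>{a, x', y} \<in> E\<close> \<open>{a, x', y'} \<in> E\<close> \<open>{a, y, y'} \<in> E\<close> facts
    by (intro induces_tetrahedronI) (auto simp: edge_XYY)
  moreover have "{y, y', y''} \<notin> E" using facts by (simp add: nonedge_YYY)
  ultimately have "{y, y'} = {a, y'}"
    using nonedge_pairs_eq[of "{a, x', y, y'}" y'' y y' a y'] facts by auto
  then show False using facts by (auto simp: doubleton_eq_iff)
qed

lemma link_dichotomy: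
  assumes a: "a \<in> K" and x: "x \<in> X" "x' \<in> X" "x \<noteq> x'" and y: "y \<in> Y" "y' \<in> Y" "y \<noteq> y'"
  shows "{a, x, x'} \<in> E \<longleftrightarrow> {a, y, y'} \<notin> E"
proof -
  have T: "induces_tetrahedron V E {x, x', y, y'}" using tetrahedron_XXYY x y .
  have a': "a \<in> V - {x, x', y, y'}" using a x y by auto
  have "{a, x, y} \<in> E" "{a, x, y'} \<in> E" "{a, x', y} \<in> E" "{a, x', y'} \<in> E"
    using cross_edge a x y by auto
  then have "{a, x, x'} \<notin> E \<or> {a, y, y'} \<notin> E"
    using nonedge_pair_exists[OF T a'] by auto
  moreover have "{x, x'} \<noteq> {y, y'}" using x y by (auto simp: doubleton_eq_iff)
  then have "{a, x, x'} \<in> E \<or> {a, y, y'} \<in> E"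
    using edge_if_other_pair_nonedge[OF T a', of x x' y y'] x y by auto
  ultimately show ?thesis by blast
qed

definition KX :: "'a set" where
  "KX = {a \<in> K. \<forall>x\<in>X. \<forall>x'\<in>X. x \<noteq> x' \<longrightarrow> {a, x, x'} \<notin> E}"

lemma KX_sub: "KX \<subseteq> K"
  unfolding KX_def by blast

lemma KX_link:
  assumes "a \<in> KX"
  shows "x \<in> X \<Longrightarrow> x' \<in> X \<Longrightarrow> x \<noteq> x' \<Longrightarrow> {a, x, x'} \<notin> E"
    and "y \<in> Y \<Longrightarrow> y' \<in> Y \<Longrightarrow> y \<noteq> y' \<Longrightarrow> {a, y, y'} \<in> E"
proof -
  show "{a, x, x'} \<notin> E" if "x \<in> X" "x' \<in> X" "x \<noteq> x'" for x x'
    using assms that unfolding KX_def by blast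
  obtain x x' where "x \<in> X" "x' \<in> X" "x \<noteq> x'" by (rule ex_two_in_X)
  then show "{a, y, y'} \<in> E" if "y \<in> Y" "y' \<in> Y" "y \<noteq> y'" for y y'
    using link_dichotomy[of a x x' y y'] assms that unfolding KX_def by blast
qed

lemma K_diff_KX_link:
  assumes "a \<in> K - KX"
  shows "x \<in> X \<Longrightarrow> x' \<in> X \<Longrightarrow> x \<noteq> x' \<Longrightarrow> {a, x, x'} \<in> E"
    and "y \<in> Y \<Longrightarrow> y' \<in> Y \<Longrightarrow> y \<noteq> y' \<Longrightarrow> {a, y, y'} \<notin> E"
proof -
  obtain x0 x0' where x0: "x0 \<in> X" "x0' \<in> X" "x0 \<noteq> x0'" "{a, x0, x0'} \<in> E"
    using assms unfolding KX_def by blast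
  show YY: "{a, y, y'} \<notin> E" if "y \<in> Y" "y' \<in> Y" "y \<noteq> y'" for y y'
    using link_dichotomy[of a x0 x0' y y'] assms x0 that by blast
  obtain y y' where "y \<in> Y" "y' \<in> Y" "y \<noteq> y'" by (rule ex_two_in_Y)
  then show "{a, x, x'} \<in> E" if "x \<in> X" "x' \<in> X" "x \<noteq> x'" for x x'
    using link_dichotomy[of a x x' y y'] YY assms that by blast
qed

lemma card_KX_le_2: "card KX \<le> 2"
proof -
  obtain x where x: "x \<in> X" using ex_two_in_X by blast
  obtain y y' where y: "y \<in> Y" "y' \<in> Y" "y \<noteq> y'" by (rule ex_two_in_Y)
  show ?thesis
  proof (rule card_apexes_le_2[OF K])
    show "{x, y, y'} \<in> E" using edge_XYY x y .
    fix a assume "a \<in> KX"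
    then show "{a, x, y} \<in> E \<and> {a, x, y'} \<in> E \<and> {a, y, y'} \<in> E"
      using cross_edge KX_link(2) KX_sub x y by blast
  qed (use x y KX_sub in auto)
qed

lemma card_K_diff_KX_le_2: "card (K - KX) \<le> 2"
proof -
  obtain y where y: "y \<in> Y" using ex_two_in_Y by blast
  obtain x x' where x: "x \<in> X" "x' \<in> X" "x \<noteq> x'" by (rule ex_two_in_X)
  show ?thesis
  proof (rule card_apexes_le_2[OF K])
    show "{y, x, x'} \<in> E" using edge_XXY[OF x y] by (simp add: insert_commute)
    fix a assume "a \<in> K - KX"
    then show "{a, y, x} \<in> E \<and> {a, y, x'} \<in> E \<and> {a, x, x'} \<in> E"
      using cross_edge[of a x y] cross_edge[of a x' y] K_diff_KX_link(1) x y by (auto simp: insert_commute)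
  qed (use x y in auto)
qed

lemma card_KX: "card KX = 2" and card_K_diff_KX: "card (K - KX) = 2"
proof -
  have "card KX + card (K - KX) = 4"
    using card_K card_Diff_subset[OF finite_subset[OF KX_sub finite_K] KX_sub]
      card_mono[OF finite_K KX_sub] by simp
  then show "card KX = 2" "card (K - KX) = 2" using card_KX_le_2 card_K_diff_KX_le_2 by auto
qed

lemma mixed_pair_edge:
  assumes a: "a \<in> KX" and c: "c \<in> K - KX" and v: "v \<in> V - K"
  shows "{a, c, v} \<in> E"
proof -
  have edges: "{a, c, x} \<in> E \<and> {a, c, y} \<in> E"
    if x: "x \<in> X" and y: "y \<in> Y" "y' \<in> Y" "y \<noteq> y'" for x y y'
  proof -
    have "a \<in> K" using a KX_sub by blast
    then have T: "induces_tetrahedron V E {a, x, y, y'}"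
      using cross_edge KX_link(2)[OF a] edge_XYY x y by (intro induces_tetrahedronI) auto
    have c': "c \<in> V - {a, x, y, y'}" using a c x y by auto
    have "{c, y, y'} \<notin> E" using K_diff_KX_link(2)[OF c] y .
    then have "{c, a, x} \<in> E" "{c, a, y} \<in> E"
      using edge_if_other_pair_nonedge[OF T c', of y y'] \<open>a \<in> K\<close> x y
      by (auto simp: doubleton_eq_iff)
    then show ?thesis by (simp add: insert_commute)
  qed
  obtain y y' where y: "y \<in> Y" "y' \<in> Y" "y \<noteq> y'" by (rule ex_two_in_Y)
  consider "v \<in> X" | "v \<in> Y" using outside_K_cases v by blast
  then show ?thesis
  proof cases
    case 1
    then show ?thesis using edges y by blast
  next
    case 2
    obtain x where "x \<in> X" using ex_two_in_X by blast
    moreover obtain y' where "y' \<in> Y" "y' \<noteq> v" by (rule ex_other_in_Y)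
    ultimately show ?thesis using edges 2 by blast
  qed
qed

lemma ex_three_in_Y: obtains y0 y1 y2 where "{y0, y1, y2} \<subseteq> Y" "distinct [y0, y1, y2]"
proof -
  obtain y0 where "y0 \<in> Y" by (rule ex_other_in_Y)
  moreover obtain y1 y2 where "y1 \<in> Y" "y2 \<in> Y" "distinct [y0, y1, y2]"
    using card_Y_ge_3 by (rule ex_two_others_if_card_ge_3)
  ultimately show ?thesis using that by simp
qed

lemma KX_pair_edge_iff:
  assumes a: "a \<in> KX" "a' \<in> KX" "a \<noteq> a'" and v: "v \<in> V - K"
  shows "{a, a', v} \<in> E \<longleftrightarrow> v \<in> Y"
proof -
  have aK: "a \<in> K" "a' \<in> K" using a KX_sub by auto
  have exactly_one:
    "({a, a', x} \<notin> E \<and> {a, a', y} \<in> E \<and> {a, a', y'} \<in> E) \<or>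
     ({a, a', x} \<in> E \<and> {a, a', y} \<notin> E \<and> {a, a', y'} \<in> E) \<or>
     ({a, a', x} \<in> E \<and> {a, a', y} \<in> E \<and> {a, a', y'} \<notin> E)"
    if "x \<in> X" "y \<in> Y" "y' \<in> Y" "y \<noteq> y'" for x y y'
  proof -
    have "\<exists>!w. w \<in> {x, y, y'} \<and> {a, a', w} \<notin> E"
      using that a aK cross_edge KX_link(2) edge_XYY by (intro apex_pair_unique_nonedge) auto
    then show ?thesis using ex1_mem_three_iff[of x y y' "\<lambda>w. {a, a', w} \<notin> E"] that by simp
  qed
  have X_nonedge: "{a, a', x} \<notin> E" if x: "x \<in> X" for x
  proof
    assume "{a, a', x} \<in> E"
    then have alternate: "{a, a', y} \<in> E \<longleftrightarrow> {a, a', y'} \<notin> E"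
      if "y \<in> Y" "y' \<in> Y" "y \<noteq> y'" for y y'
      using exactly_one[OF x that] \<open>{a, a', x} \<in> E\<close> by blast
    obtain y0 y1 y2 where "{y0, y1, y2} \<subseteq> Y" "distinct [y0, y1, y2]" by (rule ex_three_in_Y)
    then show False using alternate[of y0 y1] alternate[of y0 y2] alternate[of y1 y2] by auto
  qed
  show ?thesis
  proof (cases "v \<in> X")
    case True
    then show ?thesis using X_nonedge by auto
  next
    case False
    then have "v \<in> Y" using outside_K_cases v by blast
    moreover obtain x where "x \<in> X" using ex_two_in_X by blast
    moreover obtain y' where "y' \<in> Y" "y' \<noteq> v" by (rule ex_other_in_Y)
    ultimately show ?thesis using exactly_one[of x v y'] X_nonedge by blast
  qed
qed

lemma K_diff_KX_pair_edge_iff: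
  assumes c: "c \<in> K - KX" "c' \<in> K - KX" "c \<noteq> c'" and v: "v \<in> V - K"
  shows "{c, c', v} \<in> E \<longleftrightarrow> v \<in> X"
proof -
  obtain a a' where a: "KX = {a, a'}" "a \<noteq> a'" using card_KX card_2_iff by metis
  have "K - KX = {c, c'}"
  proof -
    obtain d d' where "K - KX = {d, d'}" using card_K_diff_KX card_2_iff by metis
    then show ?thesis using c by auto
  qed
  then have K_eq: "K = {a, a', c, c'}" using a(1) KX_sub by blast
  have v': "v \<in> V - {a, a', c, c'}" using v K_eq by blast
  have "{v, a, c} \<in> E" "{v, a, c'} \<in> E" "{v, a', c} \<in> E" "{v, a', c'} \<in> E"
    using mixed_pair_edge[OF _ _ v] a c by (auto simp: insert_commute)
  then have "{v, a, a'} \<notin> E \<or> {v, c, c'} \<notin> E"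
    using nonedge_pair_exists[OF K[unfolded K_eq] v'] by auto
  moreover have "{a, a'} \<noteq> {c, c'}" using a c by (auto simp: doubleton_eq_iff)
  then have "{v, a, a'} \<in> E \<or> {v, c, c'} \<in> E"
    using edge_if_other_pair_nonedge[OF K[unfolded K_eq] v', of a a' c c'] a c by auto
  moreover have "{a, a', v} \<in> E \<longleftrightarrow> v \<in> Y" using KX_pair_edge_iff a v by auto
  ultimately show ?thesis using outside_K_cases v by (auto simp: insert_commute)
qed

definition S :: "'a set" where "S = X \<union> KX"

lemma S_sub: "S \<subseteq> V"
  using X_sub KX_sub K_sub unfolding S_def by blast

lemma card_S: "card S = card X + 2"
proof -
  have "finite X" using card_X by (simp add: card_ge_0_finite)
  moreover have "finite KX" using finite_K KX_sub finite_subset by blast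
  moreover have "X \<inter> KX = {}" using X_sub KX_sub by blast
  ultimately show ?thesis unfolding S_def using card_KX by (simp add: card_Un_disjoint)
qed

lemma in_S_iff_outside: "v \<in> V - K \<Longrightarrow> v \<in> S \<longleftrightarrow> v \<in> X"
  and in_S_iff_K: "a \<in> K \<Longrightarrow> a \<in> S \<longleftrightarrow> a \<in> KX"
  unfolding S_def using X_sub KX_sub by auto

lemma triple_in_cut_triples_S_iff:
  assumes "{u, v, w} \<subseteq> V" "distinct [u, v, w]"
  shows "{u, v, w} \<in> cut_triples V S \<longleftrightarrow>
    (u \<in> S \<or> v \<in> S \<or> w \<in> S) \<and> (u \<notin> S \<or> v \<notin> S \<or> w \<notin> S)"
  using assms unfolding cut_triples_def by auto

lemma edge_iff_cut_outside_K:
  assumes "e \<subseteq> V - K"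
  shows "e \<in> E \<longleftrightarrow> e \<in> cut_triples V S"
proof -
  have "e \<inter> S = e \<inter> X" "e - S = e - X" using assms in_S_iff_outside by auto
  moreover have "e \<in> E \<longleftrightarrow> e \<in> cut_triples (V - K) X"
    using outside_K assms unfolding induced_edges_def set_eq_iff by blast
  ultimately show ?thesis using assms unfolding cut_triples_def by auto
qed

lemma edge_iff_cut_one_in_K:
  assumes a: "a \<in> K" and uw: "u \<in> V - K" "w \<in> V - K" "u \<noteq> w"
  shows "{a, u, w} \<in> E \<longleftrightarrow> {a, u, w} \<in> cut_triples V S"
proof -
  have cut: "{a, u, w} \<in> cut_triples V S \<longleftrightarrow>
      (a \<in> KX \<or> u \<in> X \<or> w \<in> X) \<and> (a \<notin> KX \<or> u \<notin> X \<or> w \<notin> X)"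
    using triple_in_cut_triples_S_iff[of a u w] in_S_iff_outside in_S_iff_K a uw by auto
  consider "u \<in> X" "w \<in> X" | "u \<in> X" "w \<in> Y" | "u \<in> Y" "w \<in> X" | "u \<in> Y" "w \<in> Y"
    using outside_K_cases uw by blast
  then show ?thesis
  proof cases
    case 1
    then show ?thesis using cut KX_link(1) K_diff_KX_link(1) a uw by blast
  next
    case 2
    then show ?thesis using cut cross_edge a by auto
  next
    case 3
    then show ?thesis using cut cross_edge[of a w u] a by (auto simp: insert_commute)
  next
    case 4
    then show ?thesis using cut KX_link(2) K_diff_KX_link(2) a uw by auto
  qed
qed

lemma edge_iff_cut_two_in_K:
  assumes a: "a \<in> K" "a' \<in> K" "a \<noteq> a'" and w: "w \<in> V - K"
  shows "{a, a', w} \<in> E \<longleftrightarrow> {a, a', w} \<in> cut_triples V S"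
proof -
  have cut: "{a, a', w} \<in> cut_triples V S \<longleftrightarrow>
      (a \<in> KX \<or> a' \<in> KX \<or> w \<in> X) \<and> (a \<notin> KX \<or> a' \<notin> KX \<or> w \<notin> X)"
    using triple_in_cut_triples_S_iff[of a a' w] in_S_iff_outside in_S_iff_K a w by auto
  consider "a \<in> KX" "a' \<in> KX" | "a \<in> KX" "a' \<notin> KX" | "a \<notin> KX" "a' \<in> KX" | "a \<notin> KX" "a' \<notin> KX"
    by blast
  then show ?thesis
  proof cases
    case 1
    then show ?thesis using cut KX_pair_edge_iff a w outside_K_cases by auto
  next
    case 2
    then show ?thesis using cut mixed_pair_edge a w by auto
  next
    case 3
    then show ?thesis using cut mixed_pair_edge[of a' a w] a w by (auto simp: insert_commute)
  next
    case 4
    then show ?thesis using cut K_diff_KX_pair_edge_iff a w outside_K_cases by auto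
  qed
qed

lemma edge_and_cut_inside_K:
  assumes "e \<subseteq> K" "card e = 3"
  shows "e \<in> E" "e \<in> cut_triples V S"
proof -
  show "e \<in> E" using K assms unfolding induces_tetrahedron_def by blast
  have "\<not> e \<subseteq> A" if "A \<subseteq> K" "card A = 2" for A
    using card_mono[of A e] finite_subset[OF that(1) finite_K] that(2) assms(2) by auto
  then have "\<not> e \<subseteq> K - KX" "\<not> e \<subseteq> KX" using card_KX card_K_diff_KX KX_sub by auto
  then show "e \<in> cut_triples V S"
    using assms K_sub in_S_iff_K unfolding cut_triples_def by auto
qed

lemma edge_iff_cut:
  assumes "e \<subseteq> V" "card e = 3"
  shows "e \<in> E \<longleftrightarrow> e \<in> cut_triples V S"
  using assms(2)
proof (cases rule: card_3_cases_by_meet[where K = K])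
  case none
  then show ?thesis using edge_iff_cut_outside_K assms(1) by blast
next
  case (one a u w)
  then show ?thesis using edge_iff_cut_one_in_K assms(1) by auto
next
  case (two a a' w)
  then show ?thesis using edge_iff_cut_two_in_K assms(1) by auto
next
  case three
  then show ?thesis using edge_and_cut_inside_K assms(2) by blast
qed

lemma edges_eq_cut_triples: "E = cut_triples V S"
proof -
  have "e \<subseteq> V \<and> card e = 3" if "e \<in> E \<or> e \<in> cut_triples V S" for e
    using that hypergraph unfolding hypergraph3_def cut_triples_def by auto
  then show ?thesis using edge_iff_cut by blast
qed

end

theorem lemma2p6:
  fixes V :: "'a set" and E :: "'a set set" and n :: nat
  assumes small: "\<And>(W :: 'a set) F. hypergraph3 W F \<Longrightarrow> card W = 8 \<Longrightarrow> \<not> contains_fano W F \<Longrightarrow>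
                   card F \<le> 48 \<and> (card F = 48 \<longrightarrow> hg_iso W F (B_V 8) (B_E 8))"
    and n_odd: "odd n" and n_ge: "n \<ge> 9"
    and H: "hypergraph3 V E" and card_V: "card V = n"
    and card_E: "real (card E) = b n"
    and nofano: "\<not> contains_fano V E"
    and tet: "\<And>K. induces_tetrahedron V E K \<Longrightarrow>
               hg_iso (V - K) (induced_edges E (V - K)) (B_V (n - 4)) (B_E (n - 4)) \<and>
               (\<forall>v \<in> V - K. deg_in E v K = 5)"
  shows "hg_iso V E (B_V n) (B_E n)"
proof -
  obtain j where j: "n = 2 * j + 5" "j \<ge> 2"
  proof -
    obtain k where "n = 2 * k + 1" using n_odd oddE by blast
    then show ?thesis using that[of "k - 2"] n_ge by simp
  qed
  have "card V \<ge> 4" "odd (card V)" using card_V n_ge n_odd by auto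
  then obtain K where K: "induces_tetrahedron V E K"
    using ex_tetrahedron_if_card_eq_b[OF H] card_E card_V by metis
  have "hg_iso (V - K) (induced_edges E (V - K)) (B_V (2 * j + 1)) (B_E (2 * j + 1))"
    using tet[OF K] j(1) by simp
  then obtain X where X: "X \<subseteq> V - K" "card X = (2 * j + 1) div 2"
      "induced_edges E (V - K) = cut_triples (V - K) X"
    by (rule eq_cut_triples_if_hg_iso_B) (auto simp: induced_edges_def)
  have "K \<subseteq> V" "card K = 4" using K by (auto simp: induces_tetrahedron_def)
  then have "card (V - K) = n - 4" using card_V by (simp add: card_Diff_subset card_ge_0_finite)
  moreover have "finite (V - K)" using H by (simp add: hypergraph3_def)
  ultimately have "card (V - K - X) = j + 1"
    using card_Diff_subset[OF finite_subset[OF X(1)] X(1)] X(2) j(1) by simp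
  then have "card X \<ge> 2" "card (V - K - X) \<ge> 3" using X(2) j(2) by simp_all
  then interpret tetrahedron_split V E K X
    using H tet K X by unfold_locales auto
  have "card S = card V div 2" using card_S X(2) card_V j(1) by simp
  then show ?thesis
    using hg_iso_B_if_eq_cut_triples[OF _ S_sub] edges_eq_cut_triples H card_V
    by (simp add: hypergraph3_def)
qed

end
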